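(* Let $G_1$ and $G_2$ be vertex-disjoint graphs. Then $$\frac{\sigma_1(G_1\cup G_2)}{\sigma_0(G_1\cup G_2)}=\frac{\sigma_1(G_1)}{\sigma_0(G_1)}+\frac{\sigma_1(G_2)}{\sigma_0(G_2)}.$$ Moreover, for every graph $G$ with at least one vertex, no isolated vertex, and maximum degree at most $2$, $$\frac{\sigma_1(G)}{\sigma_0(G)}\ge\frac13,$$ with equality for $G=P_2$.
   Context: All graphs are finite and simple. $\sigma_0(G)$ is the number of independent vertex sets of $G$ (including the empty set) and $\sigma_1(G)$ is the number of vertex sets $S\subseteq V(G)$ whose induced subgraph has exactly one edge. $G_1\cup G_2$ is the disjoint union (vertex set $V(G_1)\cup V(G_2)$, edge set $E(G_1)\cup E(G_2)$). $P_2$ is the path on two vertices (a single edge). *)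

theory Defs
  imports Complex_Main
begin

definition simple_graph :: "'a set \<Rightarrow> 'a set set \<Rightarrow> bool" where
  "simple_graph V E \<longleftrightarrow> finite V \<and> (\<forall>e\<in>E. e \<subseteq> V \<and> card e = 2)"

definition induced_edges :: "'a set set \<Rightarrow> 'a set \<Rightarrow> 'a set set" where
  "induced_edges E S = {e \<in> E. e \<subseteq> S}"

definition sigma0 :: "'a set \<Rightarrow> 'a set set \<Rightarrow> nat" where
  "sigma0 V E = card {S. S \<subseteq> V \<and> induced_edges E S = {}}"

definition sigma1 :: "'a set \<Rightarrow> 'a set set \<Rightarrow> nat" where
  "sigma1 V E = card {S. S \<subseteq> V \<and> card (induced_edges E S) = 1}"

definition degree :: "'a set set \<Rightarrow> 'a \<Rightarrow> nat" where
  "degree E v = card {e \<in> E. v \<in> e}"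

end

theory Submission
  imports Defs
begin

(* An induced subgraph of a disjoint union is a pair of induced subgraphs of the two parts, so
   sigma0 is multiplicative and sigma1 obeys the product rule
   sigma1 (G1 u G2) = sigma1 G1 * sigma0 G2 + sigma0 G1 * sigma1 G2;
   dividing by sigma0 (G1 u G2) gives additivity of sigma1 / sigma0.

   For sigma0 <= 3 sigma1 under maximum degree 2 we induct on the vertex set. An isolated vertex
   doubles both counts, and a single edge has sigma0 = 3, sigma1 = 1. Otherwise take an edge vw
   such that another edge avoids v, and let B be the independent sets of G - (N[v] u N[w]).
   An independent set through v consists of v, a member of B and possibly the at most one
   neighbour of w other than v, so there are at most 2 |B| of them; and T |-> T u {v, w} maps B
   injectively to sets through v inducing exactly one edge. Hence
   sigma0 G <= sigma0 (G - v) + 2 |B| <= 3 sigma1 (G - v) + 3 |B| <= 3 sigma1 G. *)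

lemma finite_induced_edges: "finite S \<Longrightarrow> finite (induced_edges E S)"
  unfolding induced_edges_def by (rule finite_subset[of _ "Pow S"]) auto

lemma card_subsets_disjoint_Un:
  assumes "V1 \<inter> V2 = {}"
  shows "card {S. S \<subseteq> V1 \<union> V2 \<and> P (S \<inter> V1) \<and> Q (S \<inter> V2)}
       = card {A. A \<subseteq> V1 \<and> P A} * card {B. B \<subseteq> V2 \<and> Q B}"
proof -
  let ?L = "{S. S \<subseteq> V1 \<union> V2 \<and> P (S \<inter> V1) \<and> Q (S \<inter> V2)}"
  let ?R = "{A. A \<subseteq> V1 \<and> P A} \<times> {B. B \<subseteq> V2 \<and> Q B}"
  have "(A \<union> B) \<inter> V1 = A \<and> (A \<union> B) \<inter> V2 = B" if "(A, B) \<in> ?R" for A B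
    using that assms by auto
  then have "bij_betw (\<lambda>S. (S \<inter> V1, S \<inter> V2)) ?L ?R"
    by (intro bij_betw_byWitness[where f' = "\<lambda>(A, B). A \<union> B"]) auto
  then show ?thesis
    by (simp add: bij_betw_same_card card_cartesian_product)
qed

lemma induced_edges_disjoint_Un:
  assumes "V1 \<inter> V2 = {}" and "{} \<notin> E" and "\<forall>e\<in>E. e \<subseteq> V1 \<union> V2 \<longrightarrow> e \<subseteq> V1 \<or> e \<subseteq> V2"
    and "S \<subseteq> V1 \<union> V2"
  shows "induced_edges E S = induced_edges E (S \<inter> V1) \<union> induced_edges E (S \<inter> V2)"
    and "induced_edges E (S \<inter> V1) \<inter> induced_edges E (S \<inter> V2) = {}"
proof -
  show "induced_edges E S = induced_edges E (S \<inter> V1) \<union> induced_edges E (S \<inter> V2)"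
    using assms(3,4) unfolding induced_edges_def by blast
  show "induced_edges E (S \<inter> V1) \<inter> induced_edges E (S \<inter> V2) = {}"
    using assms(1,2) unfolding induced_edges_def by (auto dest: Int_mono[of _ V1 _ V2])
qed

lemma sigma_disjoint_Un:
  assumes "finite V1" "finite V2" "V1 \<inter> V2 = {}" and "{} \<notin> E"
    and "\<forall>e\<in>E. e \<subseteq> V1 \<union> V2 \<longrightarrow> e \<subseteq> V1 \<or> e \<subseteq> V2"
  shows "sigma0 (V1 \<union> V2) E = sigma0 V1 E * sigma0 V2 E"
    and "sigma1 (V1 \<union> V2) E = sigma1 V1 E * sigma0 V2 E + sigma0 V1 E * sigma1 V2 E"
proof -
  let ?I = "induced_edges E"
  note split = induced_edges_disjoint_Un[OF assms(3-5)]
  have "sigma0 (V1 \<union> V2) E = card {S. S \<subseteq> V1 \<union> V2 \<and> ?I (S \<inter> V1) = {} \<and> ?I (S \<inter> V2) = {}}"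
    unfolding sigma0_def using split(1) by (intro arg_cong[where f = card]) auto
  also have "\<dots> = sigma0 V1 E * sigma0 V2 E"
    unfolding sigma0_def by (rule card_subsets_disjoint_Un[OF assms(3)])
  finally show "sigma0 (V1 \<union> V2) E = sigma0 V1 E * sigma0 V2 E" .
  let ?X = "{S. S \<subseteq> V1 \<union> V2 \<and> card (?I (S \<inter> V1)) = 1 \<and> ?I (S \<inter> V2) = {}}"
  let ?Y = "{S. S \<subseteq> V1 \<union> V2 \<and> ?I (S \<inter> V1) = {} \<and> card (?I (S \<inter> V2)) = 1}"
  have fin: "finite (?I (S \<inter> V1))" "finite (?I (S \<inter> V2))" for S
    using assms(1,2) by (simp_all add: finite_induced_edges)
  have "card (?I S) = card (?I (S \<inter> V1)) + card (?I (S \<inter> V2))" if "S \<subseteq> V1 \<union> V2" for S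
    using split[OF that] fin by (simp add: card_Un_disjoint)
  then have "{S. S \<subseteq> V1 \<union> V2 \<and> card (?I S) = 1} = ?X \<union> ?Y"
    using fin by (auto simp: add_is_1)
  moreover have "finite ?X" "finite ?Y" "?X \<inter> ?Y = {}" using assms(1,2) by auto
  ultimately have "sigma1 (V1 \<union> V2) E = card ?X + card ?Y"
    unfolding sigma1_def by (simp add: card_Un_disjoint)
  also have "card ?X = sigma1 V1 E * sigma0 V2 E"
    unfolding sigma0_def sigma1_def by (rule card_subsets_disjoint_Un[OF assms(3)])
  also have "card ?Y = sigma0 V1 E * sigma1 V2 E"
    unfolding sigma0_def sigma1_def by (rule card_subsets_disjoint_Un[OF assms(3)])
  finally show "sigma1 (V1 \<union> V2) E = sigma1 V1 E * sigma0 V2 E + sigma0 V1 E * sigma1 V2 E" .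
qed

lemma sigma0_pos: "finite V \<Longrightarrow> {} \<notin> E \<Longrightarrow> 0 < sigma0 V E"
  unfolding sigma0_def induced_edges_def by (subst card_gt_0_iff) auto

lemma sigma_restrict_edges:
  "sigma0 V {e \<in> E. e \<subseteq> V} = sigma0 V E" "sigma1 V {e \<in> E. e \<subseteq> V} = sigma1 V E"
proof -
  have "induced_edges {e \<in> E. e \<subseteq> V} S = induced_edges E S" if "S \<subseteq> V" for S
    using that unfolding induced_edges_def by blast
  then show "sigma0 V {e \<in> E. e \<subseteq> V} = sigma0 V E" "sigma1 V {e \<in> E. e \<subseteq> V} = sigma1 V E"
    unfolding sigma0_def sigma1_def by (metis (mono_tags, lifting) Collect_cong)+
qed

lemma sigma_ratio_disjoint_Un:
  assumes "simple_graph V1 E1" "simple_graph V2 E2" "V1 \<inter> V2 = {}"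
  shows "real (sigma1 (V1 \<union> V2) (E1 \<union> E2)) / real (sigma0 (V1 \<union> V2) (E1 \<union> E2))
       = real (sigma1 V1 E1) / real (sigma0 V1 E1) + real (sigma1 V2 E2) / real (sigma0 V2 E2)"
proof -
  have edges1: "\<forall>e\<in>E1. e \<subseteq> V1 \<and> card e = 2" and edges2: "\<forall>e\<in>E2. e \<subseteq> V2 \<and> card e = 2"
    and fin: "finite V1" "finite V2" using assms(1,2) by (auto simp: simple_graph_def)
  have no_empty: "{} \<notin> E1 \<union> E2" using edges1 edges2 by (metis Un_iff card.empty zero_neq_numeral)
  have "\<not> e \<subseteq> V1" if "e \<in> E2" for e
    using that edges2 no_empty assms(3) by (metis Int_greatest UnCI subset_empty)
  moreover have "\<not> e \<subseteq> V2" if "e \<in> E1" for e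
    using that edges1 no_empty assms(3) by (metis Int_greatest UnCI subset_empty)
  ultimately have "{e \<in> E1 \<union> E2. e \<subseteq> V1} = E1" "{e \<in> E1 \<union> E2. e \<subseteq> V2} = E2"
    using edges1 edges2 by auto
  then have restrict: "sigma0 V1 (E1 \<union> E2) = sigma0 V1 E1" "sigma1 V1 (E1 \<union> E2) = sigma1 V1 E1"
      "sigma0 V2 (E1 \<union> E2) = sigma0 V2 E2" "sigma1 V2 (E1 \<union> E2) = sigma1 V2 E2"
    using sigma_restrict_edges[of V1 "E1 \<union> E2"] sigma_restrict_edges[of V2 "E1 \<union> E2"] by simp_all
  have "\<forall>e\<in>E1 \<union> E2. e \<subseteq> V1 \<union> V2 \<longrightarrow> e \<subseteq> V1 \<or> e \<subseteq> V2" using edges1 edges2 by blast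
  note product = sigma_disjoint_Un[OF fin assms(3) no_empty this, unfolded restrict]
  have "0 < sigma0 V1 E1" "0 < sigma0 V2 E2"
    using sigma0_pos fin no_empty by blast+
  then show ?thesis unfolding product by (simp add: field_simps)
qed

lemma sigma_delete_isolated:
  assumes "finite W" "v \<in> W" "{} \<notin> E" "\<forall>e\<in>E. e \<subseteq> W \<longrightarrow> v \<notin> e"
  shows "sigma0 W E = 2 * sigma0 (W - {v}) E" "sigma1 W E = 2 * sigma1 (W - {v}) E"
proof -
  have no_edge: "induced_edges E S = {}" if "S \<subseteq> {v}" for S
    using that assms(2-4) unfolding induced_edges_def by (auto simp: subset_singleton_iff)
  then have "{S. S \<subseteq> {v} \<and> induced_edges E S = {}} = Pow {v}"
      "{S. S \<subseteq> {v} \<and> card (induced_edges E S) = 1} = {}"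
    by auto
  then have "sigma0 {v} E = 2" "sigma1 {v} E = 0"
    unfolding sigma0_def sigma1_def by (simp_all add: card_Pow)
  moreover have "\<forall>e\<in>E. e \<subseteq> (W - {v}) \<union> {v} \<longrightarrow> e \<subseteq> W - {v} \<or> e \<subseteq> {v}"
    using assms(2,4) by auto
  moreover have "W = (W - {v}) \<union> {v}" using assms(2) by auto
  ultimately show "sigma0 W E = 2 * sigma0 (W - {v}) E" "sigma1 W E = 2 * sigma1 (W - {v}) E"
    using sigma_disjoint_Un[of "W - {v}" "{v}" E] assms(1,3) by simp_all
qed

lemma sigma_edge:
  assumes "a \<noteq> b" "{a, b} \<in> E" "\<forall>e\<in>E. card e = 2"
  shows "sigma0 {a, b} E = 3" "sigma1 {a, b} E = 1"
proof -
  have "e = {a, b}" if "e \<in> E" "e \<subseteq> {a, b}" for e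
    using that assms(1,3) by (intro card_subset_eq) auto
  then have induced: "induced_edges E S = (if S = {a, b} then {{a, b}} else {})" if "S \<subseteq> {a, b}" for S
    using that assms(2) unfolding induced_edges_def by auto
  have "{S. S \<subseteq> {a, b} \<and> induced_edges E S = {}} = Pow {a, b} - {{a, b}}"
    using induced by (auto split: if_splits)
  moreover have "{S. S \<subseteq> {a, b} \<and> card (induced_edges E S) = 1} = {{a, b}}"
    using induced by (auto split: if_splits)
  ultimately show "sigma0 {a, b} E = 3" "sigma1 {a, b} E = 1"
    unfolding sigma0_def sigma1_def using assms(1) by (simp_all add: card_Pow)
qed

definition neighbours :: "'a set set \<Rightarrow> 'a \<Rightarrow> 'a set" where
  "neighbours E v = {u. {v, u} \<in> E}"

lemma neighbours_finite_card_le_degree: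
  assumes "finite E"
  shows "finite (neighbours E v)" "card (neighbours E v) \<le> degree E v"
proof -
  have inj: "inj_on (\<lambda>u. {v, u}) (neighbours E v)"
    by (rule inj_onI) (metis doubleton_eq_iff)
  have image: "(\<lambda>u. {v, u}) ` neighbours E v \<subseteq> {e \<in> E. v \<in> e}"
    unfolding neighbours_def by auto
  show "finite (neighbours E v)"
    using finite_imageD[OF finite_subset[OF image] inj] assms by simp
  show "card (neighbours E v) \<le> degree E v"
    unfolding degree_def using card_inj_on_le[OF inj image] assms by simp
qed

lemma edge_eq_neighbour:
  assumes "e \<in> E" "card e = 2" "u \<in> e"
  obtains x where "e = {u, x}" "x \<in> neighbours E u" "x \<noteq> u"
proof -
  obtain x y where xy: "e = {x, y}" "x \<noteq> y" using assms(2) by (meson card_2_iff)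
  then consider "u = x" | "u = y" using assms(3) by blast
  then show thesis
  proof cases
    case 1
    then show thesis using that[of y] xy assms(1) by (simp add: neighbours_def)
  next
    case 2
    then show thesis using that[of x] xy assms(1) by (simp add: neighbours_def insert_commute)
  qed
qed

lemma card_subsets_split_elem:
  assumes "finite W"
  shows "card {S. S \<subseteq> W \<and> P S} = card {S. S \<subseteq> W - {v} \<and> P S} + card {S. S \<subseteq> W \<and> P S \<and> v \<in> S}"
proof -
  have "{S. S \<subseteq> W \<and> P S} = {S. S \<subseteq> W - {v} \<and> P S} \<union> {S. S \<subseteq> W \<and> P S \<and> v \<in> S}"
    by auto
  moreover have "{S. S \<subseteq> W - {v} \<and> P S} \<inter> {S. S \<subseteq> W \<and> P S \<and> v \<in> S} = {}"
    by auto
  ultimately show ?thesis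
    using assms by (simp add: card_Un_disjoint)
qed

lemma card_independent_containing_le:
  assumes "finite W" "{v, w} \<in> E" "finite (neighbours E w)" "card (neighbours E w) \<le> 2"
  shows "card {S. S \<subseteq> W \<and> induced_edges E S = {} \<and> v \<in> S}
         \<le> 2 * sigma0 (W - ({v, w} \<union> neighbours E v \<union> neighbours E w)) E"
proof -
  define X where "X = {v, w} \<union> neighbours E v \<union> neighbours E w"
  define Y where "Y = neighbours E w - {v}"
  define B where "B = {T. T \<subseteq> W - X \<and> induced_edges E T = {}}"
  let ?A = "{S. S \<subseteq> W \<and> induced_edges E S = {} \<and> v \<in> S}"
  let ?f = "\<lambda>(T, Z). insert v (T \<union> Z)"
  have "v \<in> neighbours E w" using assms(2) by (simp add: neighbours_def insert_commute)
  then have Y: "finite Y" "card Y \<le> 1" using assms(3,4) by (simp_all add: Y_def)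
  have w: "w \<in> neighbours E v" using assms(2) by (simp add: neighbours_def)
  have "S \<in> ?f ` (B \<times> Pow Y)" if "S \<in> ?A" for S
  proof -
    have S: "S \<subseteq> W" "v \<in> S" and indep: "\<And>e. e \<in> E \<Longrightarrow> \<not> e \<subseteq> S"
      using that by (auto simp: induced_edges_def)
    have "S \<inter> neighbours E v = {}"
      using indep S(2) by (auto simp: neighbours_def)
    then have "S \<inter> X \<subseteq> insert v Y"
      using w by (auto simp: X_def Y_def)
    then have "S = ?f (S - X, S \<inter> Y)"
      using S(2) by (auto simp: X_def Y_def)
    moreover have "S - X \<in> B"
      using S(1) indep by (auto simp: B_def induced_edges_def)
    ultimately show ?thesis by blast
  qed
  then have "card ?A \<le> card (?f ` (B \<times> Pow Y))"
    using assms(1) Y(1) by (intro card_mono) (auto simp: B_def)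
  also have "\<dots> \<le> card (B \<times> Pow Y)"
    using assms(1) Y(1) by (intro card_image_le) (auto simp: B_def)
  also have "\<dots> = card B * 2 ^ card Y"
    using Y(1) by (simp add: card_cartesian_product card_Pow)
  also have "\<dots> \<le> card B * 2"
    using power_increasing[OF Y(2), of "2::nat"] by simp
  finally show ?thesis
    by (simp add: sigma0_def B_def X_def)
qed

lemma sigma0_le_card_single_edge_containing:
  assumes "finite W" "\<forall>e\<in>E. card e = 2" "{v, w} \<in> E" "v \<in> W" "w \<in> W"
  shows "sigma0 (W - ({v, w} \<union> neighbours E v \<union> neighbours E w)) E
         \<le> card {S. S \<subseteq> W \<and> card (induced_edges E S) = 1 \<and> v \<in> S}"
proof -
  define X where "X = {v, w} \<union> neighbours E v \<union> neighbours E w"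
  define B where "B = {T. T \<subseteq> W - X \<and> induced_edges E T = {}}"
  have single: "induced_edges E (T \<union> {v, w}) = {{v, w}}" if "T \<in> B" for T
  proof -
    have T: "T \<inter> X = {}" and indep: "\<And>e. e \<in> E \<Longrightarrow> \<not> e \<subseteq> T"
      using that by (auto simp: B_def induced_edges_def)
    have "e = {v, w}" if e: "e \<in> E" "e \<subseteq> T \<union> {v, w}" for e
    proof -
      obtain u where u: "u \<in> e" "u \<in> {v, w}"
        using e indep by blast
      moreover have "card e = 2" using e(1) assms(2) by blast
      ultimately obtain x where "e = {u, x}" "x \<in> neighbours E u" "x \<noteq> u"
        using edge_eq_neighbour[OF e(1)] by blast
      moreover from calculation have "x \<notin> T"
        using T u(2) by (auto simp: X_def)
      ultimately show ?thesis
        using u(2) e(2) by auto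
    qed
    then show ?thesis
      unfolding induced_edges_def using assms(3) by blast
  qed
  have "inj_on (\<lambda>T. T \<union> {v, w}) B"
  proof (rule inj_onI)
    fix T T' assume "T \<in> B" "T' \<in> B" "T \<union> {v, w} = T' \<union> {v, w}"
    then show "T = T'" unfolding B_def X_def by blast
  qed
  moreover have "(\<lambda>T. T \<union> {v, w}) ` B \<subseteq> {S. S \<subseteq> W \<and> card (induced_edges E S) = 1 \<and> v \<in> S}"
    using single assms(4,5) unfolding B_def by auto
  moreover have "finite {S. S \<subseteq> W \<and> card (induced_edges E S) = 1 \<and> v \<in> S}"
    using assms(1) by simp
  ultimately have "card B \<le> card {S. S \<subseteq> W \<and> card (induced_edges E S) = 1 \<and> v \<in> S}"
    by (rule card_inj_on_le)
  then show ?thesis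
    by (simp add: sigma0_def B_def X_def)
qed

lemma sigma0_le_3_sigma1_if_delete:
  assumes "finite W" "finite E" "\<forall>e\<in>E. card e = 2" "{v, w} \<in> E" "v \<in> W" "w \<in> W"
    and "degree E w \<le> 2" and "sigma0 (W - {v}) E \<le> 3 * sigma1 (W - {v}) E"
  shows "sigma0 W E \<le> 3 * sigma1 W E"
proof -
  let ?B = "sigma0 (W - ({v, w} \<union> neighbours E v \<union> neighbours E w)) E"
  have "finite (neighbours E w)" "card (neighbours E w) \<le> 2"
    using neighbours_finite_card_le_degree[OF assms(2), of w] assms(7) by auto
  then have "card {S. S \<subseteq> W \<and> induced_edges E S = {} \<and> v \<in> S} \<le> 2 * ?B"
    by (rule card_independent_containing_le[OF assms(1,4)])
  moreover have "?B \<le> card {S. S \<subseteq> W \<and> card (induced_edges E S) = 1 \<and> v \<in> S}"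
    by (rule sigma0_le_card_single_edge_containing[OF assms(1,3-6)])
  moreover have "sigma0 W E = sigma0 (W - {v}) E + card {S. S \<subseteq> W \<and> induced_edges E S = {} \<and> v \<in> S}"
      "sigma1 W E = sigma1 (W - {v}) E + card {S. S \<subseteq> W \<and> card (induced_edges E S) = 1 \<and> v \<in> S}"
    unfolding sigma0_def sigma1_def by (rule card_subsets_split_elem[OF assms(1)])+
  ultimately show ?thesis
    using assms(8) by linarith
qed

lemma sigma0_le_3_sigma1:
  assumes "finite W" "finite E" "\<forall>e\<in>E. card e = 2" "\<forall>x\<in>W. degree E x \<le> 2" "\<exists>e\<in>E. e \<subseteq> W"
  shows "sigma0 W E \<le> 3 * sigma1 W E"
  using assms(1,4,5)
proof (induction W rule: finite_psubset_induct)
  case (psubset W)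
  obtain e where e: "e \<in> E" "e \<subseteq> W" using psubset.prems(2) by blast
  have IH: "sigma0 (W - {v}) E \<le> 3 * sigma1 (W - {v}) E" if "v \<in> W" "e' \<in> E" "e' \<subseteq> W - {v}" for v e'
  proof (rule psubset.IH)
    show "W - {v} \<subset> W" using that(1) by blast
  qed (use psubset.prems(1) that(2,3) in auto)
  show ?case
  proof (cases "\<exists>e'\<in>E. e' \<subseteq> W \<and> e' \<noteq> e")
    case True
    then obtain e' where e': "e' \<in> E" "e' \<subseteq> W" "e' \<noteq> e" by blast
    have "card e = 2" "card e' = 2" using e(1) e'(1) assms(3) by auto
    then have "\<not> e \<subseteq> e'"
      using card_subset_eq[of e' e] card_ge_0_finite[of e'] e'(3) by force
    then obtain v where v: "v \<in> e" "v \<notin> e'" by blast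
    obtain w where vw: "e = {v, w}"
      using edge_eq_neighbour[OF e(1) _ v(1)] assms(3) e(1) by blast
    have "e' \<subseteq> W - {v}" using e'(2) v(2) by blast
    then have "sigma0 (W - {v}) E \<le> 3 * sigma1 (W - {v}) E"
      using IH e'(1) v(1) e(2) by blast
    moreover have "{v, w} \<in> E" "v \<in> W" "w \<in> W"
      using e vw by auto
    ultimately show ?thesis
      using sigma0_le_3_sigma1_if_delete[OF psubset.hyps(1) assms(2,3)] psubset.prems(1) by blast
  next
    case False
    show ?thesis
    proof (cases "W = e")
      case True
      obtain a b where "e = {a, b}" "a \<noteq> b" using e(1) assms(3) by (meson card_2_iff)
      then show ?thesis using True sigma_edge[of a b E] e(1) assms(3) by simp
    next
      case False
      then obtain v where v: "v \<in> W" "v \<notin> e" using e(2) by blast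
      have "\<forall>e'\<in>E. e' \<subseteq> W \<longrightarrow> v \<notin> e'"
        using \<open>\<not> (\<exists>e'\<in>E. e' \<subseteq> W \<and> e' \<noteq> e)\<close> v(2) by blast
      moreover have "{} \<notin> E" using assms(3) by force
      moreover have "e \<subseteq> W - {v}" using e(2) v(2) by blast
      ultimately show ?thesis
        using sigma_delete_isolated[OF psubset.hyps(1) v(1)] IH[OF v(1) e(1)] by simp
    qed
  qed
qed

lemma sigma_ratio_ge_one_third:
  assumes "simple_graph V E" "E \<noteq> {}" "\<forall>v\<in>V. degree E v \<le> 2"
  shows "1 / 3 \<le> real (sigma1 V E) / real (sigma0 V E)"
proof -
  have edges: "\<forall>e\<in>E. e \<subseteq> V" "\<forall>e\<in>E. card e = 2" and "finite V"
    using assms(1) by (auto simp: simple_graph_def)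
  have "finite E"
    using edges(1) \<open>finite V\<close> by (intro finite_subset[of E "Pow V"]) auto
  moreover have "\<exists>e\<in>E. e \<subseteq> V" using edges(1) assms(2) by blast
  ultimately have "sigma0 V E \<le> 3 * sigma1 V E"
    by (rule sigma0_le_3_sigma1[OF \<open>finite V\<close> _ edges(2) assms(3)])
  moreover have "{} \<notin> E" using edges(2) by (metis card.empty zero_neq_numeral)
  then have "0 < sigma0 V E" by (rule sigma0_pos[OF \<open>finite V\<close>])
  ultimately show ?thesis
    by (simp add: divide_simps)
qed

theorem mainTheorem15:
  shows "(\<forall>(V1::'a set) E1 V2 E2. simple_graph V1 E1 \<and> simple_graph V2 E2 \<and> V1 \<inter> V2 = {} \<longrightarrow>
            real (sigma1 (V1 \<union> V2) (E1 \<union> E2)) / real (sigma0 (V1 \<union> V2) (E1 \<union> E2))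
          = real (sigma1 V1 E1) / real (sigma0 V1 E1) + real (sigma1 V2 E2) / real (sigma0 V2 E2))
    \<and> (\<forall>(V::'a set) E. simple_graph V E \<and> V \<noteq> {} \<and> (\<forall>v\<in>V. degree E v \<ge> 1) \<and> (\<forall>v\<in>V. degree E v \<le> 2)
          \<longrightarrow> real (sigma1 V E) / real (sigma0 V E) \<ge> 1/3)
    \<and> (\<forall>a b::'a. a \<noteq> b \<longrightarrow> real (sigma1 {a, b} {{a, b}}) / real (sigma0 {a, b} {{a, b}}) = 1/3)"
proof (intro conjI allI impI, goal_cases)
  case (1 V1 E1 V2 E2)
  then show ?case using sigma_ratio_disjoint_Un by blast
next
  case (2 V E)
  then obtain v where "v \<in> V" "degree E v \<noteq> 0" by fastforce
  then have "E \<noteq> {}" by (auto simp: degree_def)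
  then show ?case using sigma_ratio_ge_one_third 2 by blast
next
  case (3 a b)
  then show ?case using sigma_edge[of a b "{{a, b}}"] by simp
qed

end
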